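(* Let $a,c\in\mathbb{R}$, $b\in(\max\{a,0\},\infty)$, $h\in\mathbb{N}$, $v=(v_1,\dots,v_h)\in\mathbb{R}^h$, $f\in C^1(\mathbb{R},\mathbb{R})$, $p\in C(\mathbb{R},\mathbb{R})$ satisfy for all $x\in\mathbb{R}$ that $f'(x)>0=f(a)$ and $p^{-1}(\mathbb{R}\setminus\{0\})=(a,b)$, with $\mathcal{N}^\theta$, $\mathcal{L}$, $\mathcal{G}$ as in the context. Assume for all $x\in\mathbb{R}$ that $p(x)\ge0$, assume that $f$ is strictly convex, let $\Lambda=\sup_{x\in[a,b]}f'(x)$, assume $\min_{j\in\{1,\dots,h\}}v_j>0$, let $\Theta=(\Theta_1,\dots,\Theta_h)\in C([0,\infty),\mathbb{R}^h)$ satisfy for all $t\in[0,\infty)$ that $\Theta_t=\Theta_0+\int_0^t\mathcal{G}(\Theta_s)\,\mathrm{d}s$ (write $\Theta_{i,t}$ for the $i$-th coordinate of $\Theta_t$), assume $\sum_{j\in\{i\in\{1,\dots,h\}\colon\Theta_{i,0}<b\}}v_j\ge\Lambda$, and let $\vartheta\in\mathbb{R}^h$ satisfy $$\limsup_{t\to\infty}\big(\|\Theta_t-\vartheta\|+|\mathcal{L}(\Theta_t)-\mathcal{L}(\vartheta)|+\|\mathcal{G}(\Theta_t)\|+\|\mathcal{G}(\vartheta)\|\big)=0.$$ Then $\mathcal{N}^\vartheta(b)\ge f(b)$.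
   Context: For $\theta=(\theta_1,\dots,\theta_h)\in\mathbb{R}^h$ let $\mathcal{N}^\theta(x)=c+\sum_{j=1}^hv_j\max\{x-\theta_j,0\}$ for $x\in\mathbb{R}$, let $\mathcal{L}(\theta)=\int_{\mathbb{R}}(\mathcal{N}^\theta(x)-f(x))^2p(x)\,\mathrm{d}x$, and let $\mathcal{G}\colon\mathbb{R}^h\to\mathbb{R}^h$ satisfy $\mathcal{G}(\theta)=-(\nabla\mathcal{L})(\theta)$ at every $\theta$ at which $\mathcal{L}$ is differentiable. $\|\cdot\|$ is the Euclidean norm. *)

theory Defs
  imports "HOL-Analysis.Analysis"
begin

definition strictly_convex_on :: "real set \<Rightarrow> (real \<Rightarrow> real) \<Rightarrow> bool" where
  "strictly_convex_on S f \<longleftrightarrow>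
     (\<forall>x\<in>S. \<forall>y\<in>S. \<forall>u::real. x \<noteq> y \<and> 0 < u \<and> u < 1 \<longrightarrow>
        f (u * x + (1 - u) * y) < u * f x + (1 - u) * f y)"

definition netw :: "real \<Rightarrow> real^'h \<Rightarrow> real^'h \<Rightarrow> real \<Rightarrow> real" where
  "netw c v \<theta> x = c + (\<Sum>j\<in>UNIV. v $ j * max (x - \<theta> $ j) 0)"

definition risk :: "real \<Rightarrow> real^'h \<Rightarrow> (real \<Rightarrow> real) \<Rightarrow> (real \<Rightarrow> real) \<Rightarrow> real^'h \<Rightarrow> real" where
  "risk c v f p \<theta> = integral UNIV (\<lambda>x. (netw c v \<theta> x - f x)\<^sup>2 * p x)"

end

theory Submission
  imports Defs
begin

text \<open>
  Suppose the limit network satisfies N(b) < f(b). The risk is differentiable and its gradient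
  has components -2 v_j times the integral of (N - f) p over [max a theta_j, b]
  (\<open>residual_tail\<close>). On compact sets the j-th component of the flow field is therefore bounded
  by a multiple of |b - theta_j|, and a Gronwall-type argument shows that a kink starting below b
  stays below b for all times. If its limit were >= b, then near the limit the network lies
  below f close to b, the j-th component of the flow field becomes nonpositive and the kink can
  only move left, which is impossible. So the kinks below b in the limit carry total outer weight
  at least Lambda >= f' on [a, b]; to the right of the last of them, m, the network grows at
  least as fast as f, hence N - f <= N(b) - f(b) < 0 on [m, b] and the gradient component of
  that neuron is nonzero, contradicting G(theta_lim) = 0.
\<close>

section \<open>The ReLU network\<close>

lemma continuous_on_netw: "continuous_on S (netw c v \<theta>)"
  unfolding netw_def by (intro continuous_intros)

lemma continuous_on_netw_param:
  "continuous_on S (\<lambda>z. netw c v (fst z) (snd z))"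
  unfolding netw_def by (intro continuous_intros continuous_on_fst continuous_on_snd)

lemma netw_lipschitz:
  "\<bar>netw c v \<theta> x - netw c v \<theta>' y\<bar> \<le> (\<Sum>j\<in>UNIV. \<bar>v $ j\<bar>) * (\<bar>x - y\<bar> + norm (\<theta> - \<theta>'))"
proof -
  have "\<bar>max (x - \<theta> $ j) 0 - max (y - \<theta>' $ j) 0\<bar> \<le> \<bar>x - y\<bar> + norm (\<theta> - \<theta>')" for j
    using component_le_norm_cart[of "\<theta> - \<theta>'" j] by (auto simp: max_def)
  then have "\<bar>\<Sum>j\<in>UNIV. v $ j * (max (x - \<theta> $ j) 0 - max (y - \<theta>' $ j) 0)\<bar>
      \<le> (\<Sum>j\<in>UNIV. \<bar>v $ j\<bar> * (\<bar>x - y\<bar> + norm (\<theta> - \<theta>')))"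
    by (intro order_trans[OF sum_abs] sum_mono) (auto simp: abs_mult intro: mult_left_mono)
  moreover have "netw c v \<theta> x - netw c v \<theta>' y = (\<Sum>j\<in>UNIV. v $ j * (max (x - \<theta> $ j) 0 - max (y - \<theta>' $ j) 0))"
    by (simp add: netw_def sum_subtractf[symmetric] algebra_simps)
  ultimately show ?thesis
    by (simp add: sum_distrib_right[symmetric])
qed

lemma relu_shift_linearization:
  fixes x t k :: real
  shows "\<bar>max (x - (t + k)) 0 - max (x - t) 0 + (if t \<le> x then k else 0)\<bar>
     \<le> (if x \<in> {t - \<bar>k\<bar>..t + \<bar>k\<bar>} then \<bar>k\<bar> else 0)"
  by (auto simp: max_def abs_if)

lemma netw_linearization:
  "\<bar>netw c v y x - netw c v \<theta> x + (\<Sum>j\<in>UNIV. v $ j * (if \<theta> $ j \<le> x then (y - \<theta>) $ j else 0))\<bar>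
     \<le> (\<Sum>j\<in>UNIV. \<bar>v $ j\<bar> *
          (if x \<in> {\<theta> $ j - \<bar>(y - \<theta>) $ j\<bar>..\<theta> $ j + \<bar>(y - \<theta>) $ j\<bar>} then \<bar>(y - \<theta>) $ j\<bar> else 0))"
proof -
  have "netw c v y x - netw c v \<theta> x + (\<Sum>j\<in>UNIV. v $ j * (if \<theta> $ j \<le> x then (y - \<theta>) $ j else 0))
      = (\<Sum>j\<in>UNIV. v $ j * (max (x - (\<theta> $ j + (y - \<theta>) $ j)) 0 - max (x - \<theta> $ j) 0
                              + (if \<theta> $ j \<le> x then (y - \<theta>) $ j else 0)))"
    by (simp add: netw_def sum_subtractf[symmetric] sum.distrib[symmetric] algebra_simps)
  then show ?thesis
    by (auto simp: abs_mult intro!: order_trans[OF sum_abs] sum_mono mult_left_mono relu_shift_linearization)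
qed

lemma netw_increment_past_kinks:
  assumes "x \<le> y" and past: "\<And>j. \<theta> $ j < y \<Longrightarrow> \<theta> $ j \<le> x"
  shows "netw c v \<theta> y - netw c v \<theta> x = (\<Sum>j\<in>{j. \<theta> $ j < y}. v $ j) * (y - x)"
proof -
  have "netw c v \<theta> y - netw c v \<theta> x = (\<Sum>j\<in>UNIV. v $ j * (max (y - \<theta> $ j) 0 - max (x - \<theta> $ j) 0))"
    by (simp add: netw_def sum_subtractf[symmetric] algebra_simps)
  also have "\<dots> = (\<Sum>j\<in>UNIV. if \<theta> $ j < y then v $ j * (y - x) else 0)"
  proof (rule sum.cong)
    fix j
    show "v $ j * (max (y - \<theta> $ j) 0 - max (x - \<theta> $ j) 0) = (if \<theta> $ j < y then v $ j * (y - x) else 0)"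
      using past[of j] \<open>x \<le> y\<close> by (auto simp: max_def)
  qed simp
  also have "\<dots> = (\<Sum>j\<in>{j. \<theta> $ j < y}. v $ j) * (y - x)"
    by (simp add: sum.If_cases sum_distrib_right)
  finally show ?thesis .
qed

lemma netw_below_target_nearby:
  fixes \<theta>lim :: "real^'h"
  assumes below: "netw c v \<theta>lim b < f b" and "isCont f b"
  obtains \<delta> where "0 < \<delta>" "\<And>\<theta> x. norm (\<theta> - \<theta>lim) < \<delta> \<Longrightarrow> \<bar>x - b\<bar> < \<delta> \<Longrightarrow> netw c v \<theta> x < f x"
proof -
  define \<eta> where "\<eta> = f b - netw c v \<theta>lim b"
  define V where "V = (\<Sum>j\<in>UNIV. \<bar>v $ j\<bar>)"
  have "0 < \<eta>" "0 \<le> V"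
    using below by (auto simp: \<eta>_def V_def sum_nonneg)
  obtain \<delta>1 where "0 < \<delta>1" and f_near: "\<And>x. \<bar>x - b\<bar> < \<delta>1 \<Longrightarrow> \<bar>f x - f b\<bar> < \<eta> / 2"
    using \<open>isCont f b\<close> \<open>0 < \<eta>\<close> unfolding continuous_at_eps_delta dist_real_def
    by (metis half_gt_zero)
  define \<delta> where "\<delta> = min \<delta>1 (\<eta> / (4 * (V + 1)))"
  have "0 < \<delta>"
    using \<open>0 < \<delta>1\<close> \<open>0 < \<eta>\<close> \<open>0 \<le> V\<close> by (simp add: \<delta>_def)
  have "V * (2 * \<delta>) < \<eta> / 2"
  proof -
    have "V * (2 * \<delta>) \<le> V * (2 * (\<eta> / (4 * (V + 1))))"
      using \<open>0 \<le> V\<close> by (intro mult_left_mono) (auto simp: \<delta>_def)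
    also have "\<dots> < \<eta> / 2"
      using \<open>0 \<le> V\<close> \<open>0 < \<eta>\<close> by (simp add: field_simps)
    finally show ?thesis .
  qed
  show ?thesis
  proof (rule that[OF \<open>0 < \<delta>\<close>])
    fix \<theta> x assume "norm (\<theta> - \<theta>lim) < \<delta>" "\<bar>x - b\<bar> < \<delta>"
    then have "V * (\<bar>x - b\<bar> + norm (\<theta> - \<theta>lim)) \<le> V * (2 * \<delta>)"
      using \<open>0 \<le> V\<close> by (intro mult_left_mono) auto
    then have "netw c v \<theta> x < netw c v \<theta>lim b + \<eta> / 2"
      using netw_lipschitz[of c v \<theta> x \<theta>lim b] \<open>V * (2 * \<delta>) < \<eta> / 2\<close> unfolding V_def by linarith
    moreover have "f b - \<eta> / 2 < f x"
      using f_near[of x] \<open>\<bar>x - b\<bar> < \<delta>\<close> unfolding \<delta>_def abs_less_iff by auto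
    ultimately show "netw c v \<theta> x < f x"
      using \<eta>_def by linarith
  qed
qed

section \<open>The risk and its gradient\<close>

lemma has_integral_tail:
  fixes g :: "real \<Rightarrow> 'a::banach"
  assumes "continuous_on {a..b} g"
  shows "((\<lambda>x. if t \<le> x then g x else 0) has_integral integral {max a t..b} g) {a..b}"
proof -
  have "g integrable_on {max a t..b}"
    by (rule integrable_continuous_interval) (rule continuous_on_subset[OF assms], auto)
  moreover have "{t..} \<inter> {a..b} = {max a t..b}" by auto
  ultimately have "(g has_integral integral {max a t..b} g) ({t..} \<inter> {a..b})"
    by (simp only: integrable_integral)
  then have "((\<lambda>x. if x \<in> {t..} then g x else 0) has_integral integral {max a t..b} g) {a..b}"
    by (simp only: has_integral_restrict_Int)
  then show ?thesis by simp
qed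

lemma kink_window_integral:
  fixes t k :: real
  shows "(\<lambda>x. if x \<in> {t - \<bar>k\<bar>..t + \<bar>k\<bar>} then \<bar>k\<bar> else 0) integrable_on {a..b}"
    and "integral {a..b} (\<lambda>x. if x \<in> {t - \<bar>k\<bar>..t + \<bar>k\<bar>} then \<bar>k\<bar> else 0) \<le> 2 * k\<^sup>2"
proof -
  define l u where "l = max (t - \<bar>k\<bar>) a" and "u = min (t + \<bar>k\<bar>) b"
  define I where "I = (if l \<le> u then u - l else 0) * \<bar>k\<bar>"
  have "((\<lambda>x. \<bar>k\<bar>) has_integral I) {l..u}"
    using has_integral_const_real[of "\<bar>k\<bar>" l u] by (simp add: I_def)
  moreover have "{t - \<bar>k\<bar>..t + \<bar>k\<bar>} \<inter> {a..b} = {l..u}"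
    by (auto simp: l_def u_def)
  ultimately have "((\<lambda>x. if x \<in> {t - \<bar>k\<bar>..t + \<bar>k\<bar>} then \<bar>k\<bar> else 0) has_integral I) {a..b}"
    by (simp only: has_integral_restrict_Int)
  moreover have "I \<le> (2 * \<bar>k\<bar>) * \<bar>k\<bar>"
    unfolding I_def l_def u_def by (intro mult_right_mono) auto
  ultimately show "(\<lambda>x. if x \<in> {t - \<bar>k\<bar>..t + \<bar>k\<bar>} then \<bar>k\<bar> else 0) integrable_on {a..b}"
    and "integral {a..b} (\<lambda>x. if x \<in> {t - \<bar>k\<bar>..t + \<bar>k\<bar>} then \<bar>k\<bar> else 0) \<le> 2 * k\<^sup>2"
    by (auto simp: integral_unique has_integral_integrable power2_eq_square)
qed

lemma kink_windows_integral:
  fixes v \<theta> h :: "real^'h"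
  defines "K \<equiv> \<lambda>x. \<Sum>j\<in>UNIV. \<bar>v $ j\<bar> * (if x \<in> {\<theta> $ j - \<bar>h $ j\<bar>..\<theta> $ j + \<bar>h $ j\<bar>} then \<bar>h $ j\<bar> else 0)"
  shows "K integrable_on {a..b}" and "integral {a..b} K \<le> 2 * (\<Sum>j\<in>UNIV. \<bar>v $ j\<bar>) * (norm h)\<^sup>2"
proof -
  define W where "W j x = (if x \<in> {\<theta> $ j - \<bar>h $ j\<bar>..\<theta> $ j + \<bar>h $ j\<bar>} then \<bar>h $ j\<bar> else 0)" for j x
  have K_eq: "K = (\<lambda>x. \<Sum>j\<in>UNIV. \<bar>v $ j\<bar> * W j x)"
    unfolding K_def W_def ..
  have W_int: "W j integrable_on {a..b}" for j
    unfolding W_def by (rule kink_window_integral)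
  show "K integrable_on {a..b}"
    unfolding K_eq by (intro integrable_sum integrable_on_mult_right W_int) simp
  have "integral {a..b} K = (\<Sum>j\<in>UNIV. \<bar>v $ j\<bar> * integral {a..b} (W j))"
    unfolding K_eq by (simp add: integral_sum W_int integrable_on_mult_right)
  also have "\<dots> \<le> (\<Sum>j\<in>UNIV. \<bar>v $ j\<bar> * (2 * (norm h)\<^sup>2))"
  proof (intro sum_mono mult_left_mono)
    fix j
    have "(h $ j)\<^sup>2 \<le> (norm h)\<^sup>2"
      using component_le_norm_cart[of h j] by (metis abs_ge_zero power2_abs power_mono)
    then show "integral {a..b} (W j) \<le> 2 * (norm h)\<^sup>2"
      using kink_window_integral(2)[of a b "\<theta> $ j" "h $ j"] unfolding W_def by linarith
  qed simp
  also have "\<dots> = 2 * (\<Sum>j\<in>UNIV. \<bar>v $ j\<bar>) * (norm h)\<^sup>2"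
    unfolding sum_distrib_right[symmetric] by (simp add: ac_simps)
  finally show "integral {a..b} K \<le> 2 * (\<Sum>j\<in>UNIV. \<bar>v $ j\<bar>) * (norm h)\<^sup>2" .
qed

definition interval_risk :: "real \<Rightarrow> real^'h \<Rightarrow> (real \<Rightarrow> real) \<Rightarrow> (real \<Rightarrow> real) \<Rightarrow> real \<Rightarrow> real \<Rightarrow> real^'h \<Rightarrow> real" where
  "interval_risk c v f p a b \<theta> = integral {a..b} (\<lambda>x. (netw c v \<theta> x - f x)\<^sup>2 * p x)"

definition residual_tail :: "real \<Rightarrow> real^'h \<Rightarrow> (real \<Rightarrow> real) \<Rightarrow> (real \<Rightarrow> real) \<Rightarrow> real \<Rightarrow> real \<Rightarrow> real^'h \<Rightarrow> 'h \<Rightarrow> real" where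
  "residual_tail c v f p a b \<theta> j = integral {max a (\<theta> $ j)..b} (\<lambda>x. (netw c v \<theta> x - f x) * p x)"

lemma risk_eq_interval_risk:
  fixes v :: "real^'h"
  assumes "\<And>x. x \<notin> {a..b} \<Longrightarrow> p x = 0"
  shows "risk c v f p = interval_risk c v f p a b"
proof
  fix \<theta> :: "real^'h"
  have restrict: "(\<lambda>x. (netw c v \<theta> x - f x)\<^sup>2 * p x) = (\<lambda>x. if x \<in> {a..b} then (netw c v \<theta> x - f x)\<^sup>2 * p x else 0)"
    using assms by auto
  then show "risk c v f p \<theta> = interval_risk c v f p a b \<theta>"
    unfolding risk_def interval_risk_def by (subst (1) restrict) (rule integral_restrict_UNIV)
qed

lemma residual_tail_has_integral:
  assumes "continuous_on {a..b} f" "continuous_on {a..b} p"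
  shows "((\<lambda>x. if \<theta> $ j \<le> x then (netw c v \<theta> x - f x) * p x else 0)
          has_integral residual_tail c v f p a b \<theta> j) {a..b}"
  unfolding residual_tail_def
  by (intro has_integral_tail continuous_intros continuous_on_netw assms)

lemma quadratic_increment_bound:
  fixes r q u s :: real
  assumes "\<bar>r * q\<bar> \<le> B" "\<bar>q\<bar> \<le> P" "\<bar>u - r\<bar> \<le> W" "\<bar>u - r + s\<bar> \<le> e"
  shows "\<bar>u\<^sup>2 * q - r\<^sup>2 * q + 2 * r * q * s\<bar> \<le> 2 * B * e + P * W\<^sup>2"
proof -
  have "u\<^sup>2 * q - r\<^sup>2 * q + 2 * r * q * s = 2 * (r * q) * (u - r + s) + q * (u - r)\<^sup>2"
    by (simp add: algebra_simps power2_eq_square)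
  moreover have "\<bar>r * q\<bar> * \<bar>u - r + s\<bar> \<le> B * e"
    using assms(1,4) by (intro mult_mono) (auto intro: order_trans[OF abs_ge_zero])
  then have "\<bar>2 * (r * q) * (u - r + s)\<bar> \<le> 2 * B * e"
    by (simp add: abs_mult)
  moreover have "(u - r)\<^sup>2 \<le> W\<^sup>2"
    using assms(3) by (metis abs_ge_zero power2_abs power_mono)
  then have "\<bar>q * (u - r)\<^sup>2\<bar> \<le> P * W\<^sup>2"
    using assms(2) by (simp add: abs_mult mult_mono)
  ultimately show ?thesis by linarith
qed

lemma residual_square_linearization:
  fixes \<theta> y :: "real^'h"
  assumes "\<bar>(netw c v \<theta> x - f x) * q\<bar> \<le> B" "\<bar>q\<bar> \<le> P"
  shows "\<bar>(netw c v y x - f x)\<^sup>2 * q - (netw c v \<theta> x - f x)\<^sup>2 * q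
           + 2 * (netw c v \<theta> x - f x) * q * (\<Sum>j\<in>UNIV. v $ j * (if \<theta> $ j \<le> x then (y - \<theta>) $ j else 0))\<bar>
         \<le> 2 * B * (\<Sum>j\<in>UNIV. \<bar>v $ j\<bar> *
                 (if x \<in> {\<theta> $ j - \<bar>(y - \<theta>) $ j\<bar>..\<theta> $ j + \<bar>(y - \<theta>) $ j\<bar>} then \<bar>(y - \<theta>) $ j\<bar> else 0))
           + P * ((\<Sum>j\<in>UNIV. \<bar>v $ j\<bar>) * norm (y - \<theta>))\<^sup>2"
proof (rule quadratic_increment_bound[OF assms])
  show "\<bar>(netw c v y x - f x) - (netw c v \<theta> x - f x)\<bar> \<le> (\<Sum>j\<in>UNIV. \<bar>v $ j\<bar>) * norm (y - \<theta>)"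
    using netw_lipschitz[of c v y x \<theta> x] by simp
  show "\<bar>(netw c v y x - f x) - (netw c v \<theta> x - f x)
          + (\<Sum>j\<in>UNIV. v $ j * (if \<theta> $ j \<le> x then (y - \<theta>) $ j else 0))\<bar>
        \<le> (\<Sum>j\<in>UNIV. \<bar>v $ j\<bar> *
              (if x \<in> {\<theta> $ j - \<bar>(y - \<theta>) $ j\<bar>..\<theta> $ j + \<bar>(y - \<theta>) $ j\<bar>} then \<bar>(y - \<theta>) $ j\<bar> else 0))"
    using netw_linearization[of c v y x \<theta>] by simp
qed

lemma risk_gradient_inner_has_integral:
  fixes v \<theta> h :: "real^'h"
  assumes "continuous_on {a..b} f" "continuous_on {a..b} p"
  shows "((\<lambda>x. - 2 * (netw c v \<theta> x - f x) * p x * (\<Sum>j\<in>UNIV. v $ j * (if \<theta> $ j \<le> x then h $ j else 0)))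
          has_integral h \<bullet> (\<chi> j. - 2 * v $ j * residual_tail c v f p a b \<theta> j)) {a..b}"
proof -
  have "((\<lambda>x. \<Sum>j\<in>UNIV. (h $ j * (- 2 * v $ j)) * (if \<theta> $ j \<le> x then (netw c v \<theta> x - f x) * p x else 0))
        has_integral (\<Sum>j\<in>UNIV. (h $ j * (- 2 * v $ j)) * residual_tail c v f p a b \<theta> j)) {a..b}"
    by (intro has_integral_sum has_integral_mult_right residual_tail_has_integral assms) auto
  moreover have "(\<Sum>j\<in>UNIV. (h $ j * (- 2 * v $ j)) * (if \<theta> $ j \<le> x then (netw c v \<theta> x - f x) * p x else 0))
      = - 2 * (netw c v \<theta> x - f x) * p x * (\<Sum>j\<in>UNIV. v $ j * (if \<theta> $ j \<le> x then h $ j else 0))" for x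
    unfolding sum_distrib_left by (rule sum.cong) (auto simp: algebra_simps)
  moreover have "(\<Sum>j\<in>UNIV. (h $ j * (- 2 * v $ j)) * residual_tail c v f p a b \<theta> j)
      = h \<bullet> (\<chi> j. - 2 * v $ j * residual_tail c v f p a b \<theta> j)"
    by (simp add: inner_vec_def algebra_simps)
  ultimately show ?thesis
    by simp
qed

text \<open>Moving a kink from theta_j to theta_j + h_j changes the ReLU linearly in h_j except on a
  window of width 2|h_j| around the kink; this is what makes the remainder quadratic.\<close>

lemma interval_risk_remainder:
  fixes \<theta> y :: "real^'h"
  assumes "a \<le> b" and f: "continuous_on {a..b} f" and p: "continuous_on {a..b} p"
    and B: "\<And>x. x \<in> {a..b} \<Longrightarrow> \<bar>(netw c v \<theta> x - f x) * p x\<bar> \<le> B"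
    and P: "\<And>x. x \<in> {a..b} \<Longrightarrow> \<bar>p x\<bar> \<le> P"
  defines "V \<equiv> \<Sum>j\<in>UNIV. \<bar>v $ j\<bar>"
  shows "\<bar>interval_risk c v f p a b y - interval_risk c v f p a b \<theta>
           - (y - \<theta>) \<bullet> (\<chi> j. - 2 * v $ j * residual_tail c v f p a b \<theta> j)\<bar>
         \<le> (4 * B * V + P * V\<^sup>2 * (b - a)) * (norm (y - \<theta>))\<^sup>2"
proof -
  define h where "h = y - \<theta>"
  define K where "K x = (\<Sum>j\<in>UNIV. \<bar>v $ j\<bar> * (if x \<in> {\<theta> $ j - \<bar>h $ j\<bar>..\<theta> $ j + \<bar>h $ j\<bar>} then \<bar>h $ j\<bar> else 0))" for x
  define E where "E x = (netw c v y x - f x)\<^sup>2 * p x - (netw c v \<theta> x - f x)\<^sup>2 * p x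
    - (- 2 * (netw c v \<theta> x - f x) * p x * (\<Sum>j\<in>UNIV. v $ j * (if \<theta> $ j \<le> x then h $ j else 0)))" for x
  have "0 \<le> B"
    using B[of a] \<open>a \<le> b\<close> by auto
  have risk_int: "((\<lambda>x. (netw c v z x - f x)\<^sup>2 * p x) has_integral interval_risk c v f p a b z) {a..b}" for z
    unfolding interval_risk_def
    by (intro integrable_integral integrable_continuous_interval continuous_intros continuous_on_netw f p)
  have E_int: "(E has_integral interval_risk c v f p a b y - interval_risk c v f p a b \<theta>
                    - h \<bullet> (\<chi> j. - 2 * v $ j * residual_tail c v f p a b \<theta> j)) {a..b}"
    unfolding E_def by (intro has_integral_diff risk_int risk_gradient_inner_has_integral f p)
  have K_int: "K integrable_on {a..b}" and K_le: "integral {a..b} K \<le> 2 * V * (norm h)\<^sup>2"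
    unfolding K_def V_def by (rule kink_windows_integral)+
  have E_le: "\<bar>E x\<bar> \<le> 2 * B * K x + P * (V * norm h)\<^sup>2" if x: "x \<in> {a..b}" for x
  proof -
    have "E x = (netw c v y x - f x)\<^sup>2 * p x - (netw c v \<theta> x - f x)\<^sup>2 * p x
        + 2 * (netw c v \<theta> x - f x) * p x * (\<Sum>j\<in>UNIV. v $ j * (if \<theta> $ j \<le> x then h $ j else 0))"
      by (simp add: E_def algebra_simps)
    then show ?thesis
      unfolding K_def h_def V_def
      by (simp only: residual_square_linearization[where y = y and f = f, OF B[OF x] P[OF x]])
  qed
  have Q_int: "((\<lambda>x. 2 * B * K x + P * (V * norm h)\<^sup>2)
      has_integral 2 * B * integral {a..b} K + P * (V * norm h)\<^sup>2 * (b - a)) {a..b}"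
  proof (intro has_integral_add has_integral_mult_right)
    show "(K has_integral integral {a..b} K) {a..b}"
      using K_int by (rule integrable_integral)
    show "((\<lambda>x. P * (V * norm h)\<^sup>2) has_integral P * (V * norm h)\<^sup>2 * (b - a)) {a..b}"
      using has_integral_const_real[of "P * (V * norm h)\<^sup>2" a b] \<open>a \<le> b\<close> by (simp add: mult.commute)
  qed
  have "norm (integral {a..b} E) \<le> integral {a..b} (\<lambda>x. 2 * B * K x + P * (V * norm h)\<^sup>2)"
    by (rule integral_norm_bound_integral) (use E_int Q_int E_le in \<open>auto simp: has_integral_integrable\<close>)
  also have "\<dots> = 2 * B * integral {a..b} K + P * (V * norm h)\<^sup>2 * (b - a)"
    using Q_int by (rule integral_unique)
  also have "\<dots> \<le> 2 * B * (2 * V * (norm h)\<^sup>2) + P * (V * norm h)\<^sup>2 * (b - a)"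
    using K_le \<open>0 \<le> B\<close> by (intro add_right_mono mult_left_mono) auto
  also have "\<dots> = (4 * B * V + P * V\<^sup>2 * (b - a)) * (norm h)\<^sup>2"
    by (simp add: algebra_simps power2_eq_square)
  finally show ?thesis
    using E_int by (simp add: integral_unique h_def)
qed

lemma has_derivative_at_of_quadratic_remainder:
  fixes F :: "'a::real_normed_vector \<Rightarrow> 'b::real_normed_vector"
  assumes "bounded_linear L" and remainder: "\<And>y. norm (F y - F x - L (y - x)) \<le> K * (norm (y - x))\<^sup>2"
  shows "(F has_derivative L) (at x)"
  unfolding has_derivative_at_alt
proof (intro conjI allI impI)
  fix e :: real assume "e > 0"
  define d where "d = e / (\<bar>K\<bar> + 1)"
  have d: "d > 0" "(\<bar>K\<bar> + 1) * d = e" using \<open>e > 0\<close> by (auto simp: d_def)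
  show "\<exists>d>0. \<forall>y. norm (y - x) < d \<longrightarrow> norm (F y - F x - L (y - x)) \<le> e * norm (y - x)"
  proof (intro exI[of _ d] conjI allI impI)
    fix y assume "norm (y - x) < d"
    then have "\<bar>K\<bar> * norm (y - x) \<le> e"
      using d mult_mono[of "\<bar>K\<bar>" "\<bar>K\<bar> + 1" "norm (y - x)" d] by auto
    have "K * (norm (y - x))\<^sup>2 \<le> (\<bar>K\<bar> * norm (y - x)) * norm (y - x)"
      using mult_right_mono[OF abs_ge_self[of K], of "(norm (y - x))\<^sup>2"]
      by (simp add: power2_eq_square mult.assoc)
    also have "\<dots> \<le> e * norm (y - x)"
      by (rule mult_right_mono) (fact, simp)
    finally have "K * (norm (y - x))\<^sup>2 \<le> e * norm (y - x)" .
    with remainder[of y] show "norm (F y - F x - L (y - x)) \<le> e * norm (y - x)" by linarith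
  qed (use d in auto)
qed fact

lemma residual_bounded_on_compact:
  assumes "compact K" "continuous_on {a..b} f" "continuous_on {a..b} p"
  obtains B where "\<And>\<theta> x. \<theta> \<in> K \<Longrightarrow> x \<in> {a..b} \<Longrightarrow> \<bar>(netw c v \<theta> x - f x) * p x\<bar> \<le> B"
proof -
  have "continuous_on (K \<times> {a..b}) (\<lambda>z. (netw c v (fst z) (snd z) - f (snd z)) * p (snd z))"
    by (intro continuous_intros continuous_on_netw_param
        continuous_on_compose2[OF assms(2)] continuous_on_compose2[OF assms(3)]) auto
  then obtain B where B: "\<And>z. z \<in> K \<times> {a..b} \<Longrightarrow> norm ((netw c v (fst z) (snd z) - f (snd z)) * p (snd z)) \<le> B"
    using continuous_on_compact_bound[OF compact_Times[OF assms(1) compact_Icc]] by blast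
  show ?thesis
  proof (rule that)
    fix \<theta> x assume "\<theta> \<in> K" "x \<in> {a..b}"
    then show "\<bar>(netw c v \<theta> x - f x) * p x\<bar> \<le> B"
      using B[of "(\<theta>, x)"] by simp
  qed
qed

lemma has_derivative_interval_risk:
  fixes v \<theta> :: "real^'h"
  assumes "a \<le> b" "continuous_on {a..b} f" "continuous_on {a..b} p"
  shows "(interval_risk c v f p a b has_derivative
           (\<lambda>h. h \<bullet> (\<chi> j. - 2 * v $ j * residual_tail c v f p a b \<theta> j))) (at \<theta>)"
proof -
  obtain B where "\<And>\<theta>' x. \<theta>' \<in> {\<theta>} \<Longrightarrow> x \<in> {a..b} \<Longrightarrow> \<bar>(netw c v \<theta>' x - f x) * p x\<bar> \<le> B"
    using residual_bounded_on_compact[OF compact_sing assms(2,3)] by blast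
  then have B: "\<And>x. x \<in> {a..b} \<Longrightarrow> \<bar>(netw c v \<theta> x - f x) * p x\<bar> \<le> B"
    by blast
  obtain P where P: "\<And>x. x \<in> {a..b} \<Longrightarrow> \<bar>p x\<bar> \<le> P"
    using continuous_on_compact_bound[OF compact_Icc assms(3)] by auto
  define V where "V = (\<Sum>j\<in>UNIV. \<bar>v $ j\<bar>)"
  have "norm (interval_risk c v f p a b y - interval_risk c v f p a b \<theta>
          - (y - \<theta>) \<bullet> (\<chi> j. - 2 * v $ j * residual_tail c v f p a b \<theta> j))
        \<le> (4 * B * V + P * V\<^sup>2 * (b - a)) * (norm (y - \<theta>))\<^sup>2" for y
    unfolding real_norm_def V_def by (rule interval_risk_remainder[OF assms B P])
  then show ?thesis
    by (rule has_derivative_at_of_quadratic_remainder[OF bounded_linear_inner_left])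
qed

lemma gderiv_risk:
  fixes v \<theta> :: "real^'h"
  assumes "a \<le> b" "continuous_on {a..b} f" "continuous_on {a..b} p" "\<And>x. x \<notin> {a..b} \<Longrightarrow> p x = 0"
  shows "GDERIV (risk c v f p) \<theta> :> (\<chi> j. - 2 * v $ j * residual_tail c v f p a b \<theta> j)"
proof -
  have "risk c v f p = interval_risk c v f p a b"
    using assms(4) by (rule risk_eq_interval_risk)
  then show ?thesis
    unfolding gderiv_def using has_derivative_interval_risk[OF assms(1-3)] by simp
qed

lemma gderiv_unique:
  assumes "GDERIV F x :> D" "GDERIV F x :> D'"
  shows "D = D'"
proof -
  have "(\<lambda>h. h \<bullet> D) = (\<lambda>h. h \<bullet> D')"
    using assms has_derivative_unique unfolding gderiv_def by blast
  then have "(D - D') \<bullet> D = (D - D') \<bullet> D'" by metis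
  then have "(D - D') \<bullet> (D - D') = 0"
    by (simp add: inner_diff_right)
  then show ?thesis by simp
qed

lemma residual_tail_bound:
  assumes "a \<le> b" "continuous_on {a..b} f" "continuous_on {a..b} p"
    and B: "\<And>x. x \<in> {a..b} \<Longrightarrow> \<bar>(netw c v \<theta> x - f x) * p x\<bar> \<le> B"
  shows "\<bar>residual_tail c v f p a b \<theta> j\<bar> \<le> B * \<bar>b - \<theta> $ j\<bar>"
proof (cases "max a (\<theta> $ j) \<le> b")
  case True
  have "continuous_on {max a (\<theta> $ j)..b} (\<lambda>x. (netw c v \<theta> x - f x) * p x)"
    by (intro continuous_intros continuous_on_netw
        continuous_on_subset[OF assms(2)] continuous_on_subset[OF assms(3)]) auto
  then have int: "((\<lambda>x. (netw c v \<theta> x - f x) * p x) has_integral residual_tail c v f p a b \<theta> j)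
               {max a (\<theta> $ j)..b}"
    unfolding residual_tail_def by (intro integrable_integral integrable_continuous_interval)
  have bound: "norm ((netw c v \<theta> x - f x) * p x) \<le> B" if "x \<in> {max a (\<theta> $ j)..b} - {}" for x
    using B that by simp
  have "0 \<le> B"
    using B[of a] \<open>a \<le> b\<close> by simp
  then have "norm (residual_tail c v f p a b \<theta> j) \<le> B * (b - max a (\<theta> $ j))"
    using has_integral_bound_real[OF _ finite.emptyI int bound] True by simp
  also have "\<dots> \<le> B * \<bar>b - \<theta> $ j\<bar>"
    using True B[of a] \<open>a \<le> b\<close> by (intro mult_left_mono) auto
  finally show ?thesis by simp
next
  case False
  then show ?thesis
    using B[of a] \<open>a \<le> b\<close> by (simp add: residual_tail_def)
qed

lemma residual_tail_nonpos:
  assumes "continuous_on {a..b} f" "continuous_on {a..b} p" and "\<And>x. x \<in> {a..b} \<Longrightarrow> 0 \<le> p x"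
    and below: "\<And>x. x \<in> {max a (\<theta> $ j)..b} \<Longrightarrow> netw c v \<theta> x \<le> f x"
  shows "residual_tail c v f p a b \<theta> j \<le> 0"
proof -
  have "continuous_on {max a (\<theta> $ j)..b} (\<lambda>x. (netw c v \<theta> x - f x) * p x)"
    by (intro continuous_intros continuous_on_netw
        continuous_on_subset[OF assms(1)] continuous_on_subset[OF assms(2)]) auto
  then have "residual_tail c v f p a b \<theta> j \<le> integral {max a (\<theta> $ j)..b} (\<lambda>x. 0)"
    unfolding residual_tail_def using assms(3) below
    by (intro integral_le integrable_continuous_interval) (auto simp: mult_nonpos_nonneg)
  then show ?thesis by simp
qed

lemma residual_le_past_kinks:
  fixes v \<theta> :: "real^'h"
  assumes "x \<le> b" and past: "\<And>j. \<theta> $ j < b \<Longrightarrow> \<theta> $ j \<le> x"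
    and f_deriv: "\<And>z. z \<in> {x..b} \<Longrightarrow> (f has_real_derivative f' z) (at z)"
    and f'_le: "\<And>z. z \<in> {x..b} \<Longrightarrow> f' z \<le> L"
    and slope: "L \<le> (\<Sum>j\<in>{j. \<theta> $ j < b}. v $ j)"
  shows "netw c v \<theta> x - f x \<le> netw c v \<theta> b - f b"
proof -
  have "f b - L * b \<le> f x - L * x"
  proof (rule DERIV_nonpos_imp_nonincreasing[of x b "\<lambda>z. f z - L * z"])
    fix z assume "x \<le> z" "z \<le> b"
    then show "\<exists>y. ((\<lambda>z. f z - L * z) has_real_derivative y) (at z) \<and> y \<le> 0"
      using f'_le[of z] by (intro exI[of _ "f' z - L"]) (auto intro!: derivative_eq_intros f_deriv)
  qed (rule \<open>x \<le> b\<close>)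
  moreover have "L * (b - x) \<le> netw c v \<theta> b - netw c v \<theta> x"
    using netw_increment_past_kinks[OF \<open>x \<le> b\<close> past, of c v] slope \<open>x \<le> b\<close>
    by (auto intro: mult_right_mono)
  ultimately show ?thesis
    by (simp add: algebra_simps)
qed

lemma residual_tail_negative_at_last_kink:
  fixes v \<theta> :: "real^'h"
  assumes "a < b"
    and f_deriv: "\<And>x. x \<in> {a..b} \<Longrightarrow> (f has_real_derivative f' x) (at x)"
    and f'_le: "\<And>x. x \<in> {a..b} \<Longrightarrow> f' x \<le> L" and "0 < L"
    and slope: "L \<le> (\<Sum>j\<in>{j. \<theta> $ j < b}. v $ j)"
    and p_cont: "continuous_on {a..b} p" and p_pos: "\<And>x. x \<in> {a<..<b} \<Longrightarrow> 0 < p x"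
    and below: "netw c v \<theta> b < f b"
  obtains j where "\<theta> $ j < b" "residual_tail c v f p a b \<theta> j < 0"
proof -
  define J where "J = {j. \<theta> $ j < b}"
  have "L \<le> (\<Sum>j\<in>J. v $ j)"
    using slope unfolding J_def .
  then have "J \<noteq> {}"
    using \<open>0 < L\<close> by auto
  then have "Max ((\<lambda>i. \<theta> $ i) ` J) \<in> (\<lambda>i. \<theta> $ i) ` J"
    by (intro Max_in) auto
  then obtain j where "j \<in> J" and j_last: "Max ((\<lambda>i. \<theta> $ i) ` J) = \<theta> $ j"
    by blast
  define m where "m = max a (\<theta> $ j)"
  have "m < b"
    using \<open>j \<in> J\<close> \<open>a < b\<close> by (simp add: m_def J_def)
  have f_cont: "continuous_on {a..b} f"
    using DERIV_isCont[OF f_deriv] by (intro continuous_at_imp_continuous_on) auto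
  have "(netw c v \<theta> x - f x) * p x < 0" if x: "x \<in> {m<..<b}" for x
  proof -
    have past: "\<theta> $ i \<le> x" if "\<theta> $ i < b" for i
      using Max_ge[of "(\<lambda>i. \<theta> $ i) ` J" "\<theta> $ i"] that x j_last unfolding J_def m_def by auto
    have "netw c v \<theta> x - f x \<le> netw c v \<theta> b - f b"
      by (rule residual_le_past_kinks[where f' = f', OF _ past _ _ slope]) (use x f_deriv f'_le in \<open>auto simp: m_def\<close>)
    then have "netw c v \<theta> x - f x < 0"
      using below by simp
    moreover have "0 < p x"
      using p_pos x by (auto simp: m_def)
    ultimately show ?thesis
      by (simp add: mult_neg_pos)
  qed
  moreover have "continuous_on {m..b} (\<lambda>x. (netw c v \<theta> x - f x) * p x)"
    by (intro continuous_intros continuous_on_netw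
        continuous_on_subset[OF f_cont] continuous_on_subset[OF p_cont]) (auto simp: m_def)
  ultimately have "residual_tail c v f p a b \<theta> j < integral {m..b} (\<lambda>x. 0)"
    unfolding residual_tail_def m_def[symmetric] using \<open>m < b\<close>
    by (intro integral_less_real) auto
  with \<open>j \<in> J\<close> show ?thesis
    using that unfolding J_def by simp
qed

section \<open>The gradient flow\<close>

lemma tendsto_zero_if_Limsup_zero:
  fixes g h :: "'a \<Rightarrow> real"
  assumes "Limsup F (\<lambda>x. ereal (g x)) = 0" "\<And>x. 0 \<le> h x" "\<And>x. h x \<le> g x"
  shows "(h \<longlongrightarrow> 0) F"
proof (rule order_tendstoI)
  fix e :: real assume "e < 0"
  then show "\<forall>\<^sub>F x in F. e < h x"
    using assms(2) by (auto intro: always_eventually less_le_trans)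
next
  fix e :: real assume "0 < e"
  then have "\<forall>\<^sub>F x in F. ereal (g x) < ereal e"
    using assms(1) by (intro Limsup_lessD) simp
  then show "\<forall>\<^sub>F x in F. h x < e"
    by eventually_elim (use assms(3) in \<open>auto intro: le_less_trans\<close>)
qed

lemma has_integral_flow_component:
  fixes \<Theta> g :: "real \<Rightarrow> real^'n"
  assumes flow: "\<And>t. 0 \<le> t \<Longrightarrow> (g has_integral (\<Theta> t - \<Theta> 0)) {0..t}" and "0 \<le> s" "s \<le> t"
  shows "((\<lambda>r. g r $ j) has_integral (\<Theta> t $ j - \<Theta> s $ j)) {s..t}"
proof -
  have "g integrable_on {s..t}"
    using integrable_subinterval_real[OF has_integral_integrable[OF flow[of t]]] assms by auto
  then obtain I where I: "(g has_integral I) {s..t}" by blast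
  from has_integral_combine[OF \<open>0 \<le> s\<close> \<open>s \<le> t\<close> flow[OF \<open>0 \<le> s\<close>] I]
  have "(g has_integral (\<Theta> s - \<Theta> 0 + I)) {0..t}" .
  moreover have "(g has_integral (\<Theta> t - \<Theta> 0)) {0..t}"
    using flow assms by simp
  ultimately have "\<Theta> s - \<Theta> 0 + I = \<Theta> t - \<Theta> 0"
    by (rule has_integral_unique)
  then have "I = \<Theta> t - \<Theta> s"
    by (simp add: algebra_simps)
  with I have "(g has_integral (\<Theta> t - \<Theta> s)) {s..t}"
    by simp
  from has_integral_linear[OF this bounded_linear_vec_nth[of j]] show ?thesis
    by (simp add: o_def)
qed

text \<open>On an interval of length at most 1/(4C), w moves by at most a quarter of the maximum of |w|
  there, so it cannot reach 0.\<close>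

lemma positive_persists_short_interval:
  fixes w g :: "real \<Rightarrow> real"
  assumes cont: "continuous_on {s..t} w" and "s \<le> t" and pos: "0 < w s"
    and int: "\<And>r. r \<in> {s..t} \<Longrightarrow> (g has_integral (w r - w s)) {s..r}"
    and rate: "\<And>r. r \<in> {s..t} \<Longrightarrow> \<bar>g r\<bar> \<le> C * \<bar>w r\<bar>"
    and short: "C * (t - s) \<le> 1 / 4"
  shows "0 < w t"
proof -
  have abs_cont: "continuous_on {s..t} (\<lambda>r. \<bar>w r\<bar>)"
    using cont by (rule continuous_on_rabs)
  obtain r0 where r0: "r0 \<in> {s..t}" and max: "\<And>r. r \<in> {s..t} \<Longrightarrow> \<bar>w r\<bar> \<le> \<bar>w r0\<bar>"
    using continuous_attains_sup[OF compact_Icc _ abs_cont] \<open>s \<le> t\<close> by auto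
  define U where "U = \<bar>w r0\<bar>"
  have "0 \<le> C * \<bar>w s\<bar>"
    using rate[of s] \<open>s \<le> t\<close> by (auto intro: order_trans[OF abs_ge_zero])
  then have "0 \<le> C"
    using pos by (simp add: zero_le_mult_iff)
  have drift: "\<bar>w r - w s\<bar> \<le> U / 4" if r: "r \<in> {s..t}" for r
  proof -
    have "\<bar>g x\<bar> \<le> C * U" if "x \<in> {s..r} - {}" for x
      using rate[of x] max[of x] that r \<open>0 \<le> C\<close> unfolding U_def
      by (auto intro: order_trans mult_left_mono)
    then have "\<bar>w r - w s\<bar> \<le> C * U * (r - s)"
      using has_integral_bound_real[OF _ finite.emptyI int[OF r]] r \<open>0 \<le> C\<close> by (simp add: U_def)
    also have "\<dots> \<le> C * U * (t - s)"
      using r \<open>0 \<le> C\<close> by (intro mult_left_mono) (auto simp: U_def)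
    also have "\<dots> = U * (C * (t - s))"
      by (simp add: ac_simps)
    also have "\<dots> \<le> U / 4"
      using mult_left_mono[OF short, of U] by (simp add: U_def)
    finally show ?thesis .
  qed
  have "U \<le> w s + U / 4"
    using drift[OF r0] pos unfolding U_def by linarith
  moreover have "w s - U / 4 \<le> w t"
    using drift[of t] \<open>s \<le> t\<close> unfolding abs_le_iff by auto
  ultimately show ?thesis
    using pos by linarith
qed

text \<open>Apply the short-interval lemma on the last stretch before the first zero of w.\<close>

lemma positive_persists:
  fixes w g :: "real \<Rightarrow> real"
  assumes cont: "continuous_on {0..} w" and pos: "0 < w 0"
    and int: "\<And>s t. 0 \<le> s \<Longrightarrow> s \<le> t \<Longrightarrow> (g has_integral (w t - w s)) {s..t}"
    and rate: "\<And>T. \<exists>C. \<forall>r\<in>{0..T}. \<bar>g r\<bar> \<le> C * \<bar>w r\<bar>"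
    and "0 \<le> t"
  shows "0 < w t"
proof (rule ccontr)
  assume "\<not> 0 < w t"
  define S where "S = {0..t} \<inter> w -` {..0}"
  have "closed S"
    unfolding S_def by (rule continuous_closed_preimage[OF continuous_on_subset[OF cont]]) auto
  moreover have "t \<in> S" "bdd_below S"
    using \<open>0 \<le> t\<close> \<open>\<not> 0 < w t\<close> unfolding S_def by auto
  ultimately have "Inf S \<in> S"
    using closed_contains_Inf by blast
  define ts where "ts = Inf S"
  have ts: "0 \<le> ts" "w ts \<le> 0" and before: "\<And>r. 0 \<le> r \<Longrightarrow> r < ts \<Longrightarrow> 0 < w r"
    using \<open>Inf S \<in> S\<close> cInf_lower[OF _ \<open>bdd_below S\<close>] unfolding ts_def S_def by force+
  obtain C where C: "\<And>r. r \<in> {0..ts} \<Longrightarrow> \<bar>g r\<bar> \<le> C * \<bar>w r\<bar>"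
    using rate[of ts] by blast
  define C' where "C' = max C 1"
  define s where "s = max 0 (ts - 1 / (4 * C'))"
  have "0 < ts"
    using ts pos by (cases "ts = 0") auto
  then have s: "0 \<le> s" "s < ts" "C' * (ts - s) \<le> 1 / 4"
    unfolding s_def C'_def by (auto simp: field_simps max_def)
  have "0 < w ts"
  proof (rule positive_persists_short_interval[OF _ _ _ _ _ s(3)])
    show "continuous_on {s..ts} w"
      using continuous_on_subset[OF cont] s by auto
    show "0 < w s"
      using before s by auto
    show "(g has_integral (w r - w s)) {s..r}" if "r \<in> {s..ts}" for r
      using int that s by auto
    show "\<bar>g r\<bar> \<le> C' * \<bar>w r\<bar>" if "r \<in> {s..ts}" for r
      using C[of r] that s mult_right_mono[OF max.cobounded1[of C 1] abs_ge_zero[of "w r"]]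
      unfolding C'_def by auto
  qed (use s in auto)
  with ts show False by simp
qed

lemma flow_component_limit_le:
  fixes \<Theta> g :: "real \<Rightarrow> real^'n"
  assumes flow: "\<And>t. 0 \<le> t \<Longrightarrow> (g has_integral (\<Theta> t - \<Theta> 0)) {0..t}"
    and lim: "(\<Theta> \<longlongrightarrow> \<theta>lim) at_top" and "0 \<le> T"
    and decreasing: "\<And>t. T \<le> t \<Longrightarrow> g t $ j \<le> 0"
  shows "\<theta>lim $ j \<le> \<Theta> T $ j"
proof -
  have "\<Theta> t $ j - \<Theta> T $ j \<le> 0" if "T \<le> t" for t
    by (rule has_integral_le[OF has_integral_flow_component[OF flow \<open>0 \<le> T\<close> that] has_integral_0])
      (use decreasing in auto)
  then have "\<forall>\<^sub>F t in at_top. \<Theta> t $ j \<le> \<Theta> T $ j"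
    unfolding eventually_at_top_linorder by auto
  then show ?thesis
    using tendsto_upperbound[OF tendsto_vec_nth[OF lim]] by simp
qed

lemma flow_component_stays_below:
  fixes \<Theta> :: "real \<Rightarrow> real^'n" and G :: "real^'n \<Rightarrow> real^'n"
  assumes cont: "continuous_on {0..} \<Theta>"
    and flow: "\<And>t. 0 \<le> t \<Longrightarrow> ((\<lambda>s. G (\<Theta> s)) has_integral (\<Theta> t - \<Theta> 0)) {0..t}"
    and rate: "\<And>K. compact K \<Longrightarrow> \<exists>C. \<forall>\<theta>\<in>K. \<bar>G \<theta> $ j\<bar> \<le> C * \<bar>b - \<theta> $ j\<bar>"
    and start: "\<Theta> 0 $ j < b" and "0 \<le> t"
  shows "\<Theta> t $ j < b"
proof -
  have "0 < b - \<Theta> t $ j"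
  proof (rule positive_persists[where w = "\<lambda>r. b - \<Theta> r $ j" and g = "\<lambda>r. - G (\<Theta> r) $ j"])
    show "continuous_on {0..} (\<lambda>r. b - \<Theta> r $ j)"
      by (intro continuous_intros continuous_on_component cont)
    show "((\<lambda>r. - G (\<Theta> r) $ j) has_integral (b - \<Theta> t' $ j) - (b - \<Theta> s $ j)) {s..t'}"
      if "0 \<le> s" "s \<le> t'" for s t'
      using has_integral_neg[OF has_integral_flow_component[OF flow that]] by simp
    show "\<exists>C. \<forall>r\<in>{0..T}. \<bar>- G (\<Theta> r) $ j\<bar> \<le> C * \<bar>b - \<Theta> r $ j\<bar>" for T
    proof -
      have "compact (\<Theta> ` {0..T})"
        by (intro compact_continuous_image continuous_on_subset[OF cont]) auto
      then show ?thesis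
        using rate by fastforce
    qed
  qed (use start \<open>0 \<le> t\<close> in auto)
  then show ?thesis by simp
qed

lemma active_component_limit_below:
  fixes \<Theta> :: "real \<Rightarrow> real^'h" and G :: "real^'h \<Rightarrow> real^'h"
  assumes "a \<le> b" and f_cont: "continuous_on {a..b} f" "isCont f b"
    and p_cont: "continuous_on {a..b} p" and p_nonneg: "\<And>x. x \<in> {a..b} \<Longrightarrow> 0 \<le> p x"
    and G_eq: "\<And>\<theta> i. G \<theta> $ i = 2 * v $ i * residual_tail c v f p a b \<theta> i" and "0 \<le> v $ j"
    and cont: "continuous_on {0..} \<Theta>"
    and flow: "\<And>t. 0 \<le> t \<Longrightarrow> ((\<lambda>s. G (\<Theta> s)) has_integral (\<Theta> t - \<Theta> 0)) {0..t}"
    and lim: "(\<Theta> \<longlongrightarrow> \<theta>lim) at_top" and below: "netw c v \<theta>lim b < f b"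
    and start: "\<Theta> 0 $ j < b"
  shows "\<theta>lim $ j < b"
proof (rule ccontr)
  assume "\<not> \<theta>lim $ j < b"
  have rate: "\<exists>C. \<forall>\<theta>\<in>K. \<bar>G \<theta> $ j\<bar> \<le> C * \<bar>b - \<theta> $ j\<bar>" if K: "compact K" for K
  proof -
    obtain B where "\<And>\<theta> x. \<theta> \<in> K \<Longrightarrow> x \<in> {a..b} \<Longrightarrow> \<bar>(netw c v \<theta> x - f x) * p x\<bar> \<le> B"
      using residual_bounded_on_compact[OF K f_cont(1) p_cont] by blast
    then have "\<bar>G \<theta> $ j\<bar> \<le> (2 * v $ j * B) * \<bar>b - \<theta> $ j\<bar>" if "\<theta> \<in> K" for \<theta>
      using residual_tail_bound[OF \<open>a \<le> b\<close> f_cont(1) p_cont, of c v \<theta> B j] that \<open>0 \<le> v $ j\<close>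
      unfolding G_eq by (auto simp: abs_mult mult.assoc intro: mult_left_mono)
    then show ?thesis by blast
  qed
  obtain \<delta> where "0 < \<delta>" and \<delta>: "\<And>\<theta> x. norm (\<theta> - \<theta>lim) < \<delta> \<Longrightarrow> \<bar>x - b\<bar> < \<delta> \<Longrightarrow> netw c v \<theta> x < f x"
    using netw_below_target_nearby[OF below f_cont(2)] by blast
  obtain T where "0 \<le> T" and close: "\<And>t. T \<le> t \<Longrightarrow> norm (\<Theta> t - \<theta>lim) < \<delta>"
    using tendstoD[OF lim \<open>0 < \<delta>\<close>] unfolding eventually_at_top_linorder dist_norm
    by (metis max.bounded_iff max.cobounded2)
  have G_nonpos: "G (\<Theta> t) $ j \<le> 0" if "T \<le> t" for t
  proof -
    have "b - \<delta> < \<Theta> t $ j"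
      using component_le_norm_cart[of "\<Theta> t - \<theta>lim" j] close[OF that] \<open>\<not> \<theta>lim $ j < b\<close> by auto
    then have "residual_tail c v f p a b (\<Theta> t) j \<le> 0"
      using close[OF that] by (intro residual_tail_nonpos f_cont(1) p_cont p_nonneg less_imp_le \<delta>) auto
    then show ?thesis
      unfolding G_eq using \<open>0 \<le> v $ j\<close> by (simp add: mult_nonneg_nonpos)
  qed
  have "\<theta>lim $ j \<le> \<Theta> T $ j"
    using flow_component_limit_le[OF flow lim \<open>0 \<le> T\<close>] G_nonpos by blast
  moreover have "\<Theta> T $ j < b"
    by (rule flow_component_stays_below[OF cont flow rate start \<open>0 \<le> T\<close>])
  ultimately show False
    using \<open>\<not> \<theta>lim $ j < b\<close> by simp
qed

theorem lemma3p12: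
  fixes a b c :: real
    and v :: "real^'h"
    and f f' p :: "real \<Rightarrow> real"
    and G :: "real^'h \<Rightarrow> real^'h"
    and \<Theta> :: "real \<Rightarrow> real^'h"
    and \<theta>lim :: "real^'h"
  assumes b_gt: "b > max a 0"
    and f_deriv: "\<And>x. (f has_real_derivative f' x) (at x)"
    and f'_cont: "continuous_on UNIV f'"
    and f'_pos: "\<And>x. f' x > 0"
    and f_a: "f a = 0"
    and p_cont: "continuous_on UNIV p"
    and p_supp: "{x. p x \<noteq> 0} = {a<..<b}"
    and p_nonneg: "\<And>x. p x \<ge> 0"
    and f_strict_convex: "strictly_convex_on UNIV f"
    and v_pos: "Min (range (\<lambda>j. v $ j)) > 0"
    and G_grad: "\<And>\<theta>. risk c v f p differentiable (at \<theta>) \<Longrightarrow>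
                   GDERIV (risk c v f p) \<theta> :> - G \<theta>"
    and \<Theta>_cont: "continuous_on {0..} \<Theta>"
    and \<Theta>_flow: "\<And>t. t \<ge> 0 \<Longrightarrow> ((\<lambda>s. G (\<Theta> s)) has_integral (\<Theta> t - \<Theta> 0)) {0..t}"
    and active: "(\<Sum>j\<in>{i. \<Theta> 0 $ i < b}. v $ j) \<ge> (SUP x\<in>{a..b}. f' x)"
    and conv: "Limsup at_top (\<lambda>t::real. ereal (norm (\<Theta> t - \<theta>lim)
                 + \<bar>risk c v f p (\<Theta> t) - risk c v f p \<theta>lim\<bar>
                 + norm (G (\<Theta> t)) + norm (G \<theta>lim))) = 0"
  shows "netw c v \<theta>lim b \<ge> f b"
proof (rule ccontr)
  assume "\<not> f b \<le> netw c v \<theta>lim b"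
  then have below: "netw c v \<theta>lim b < f b" by simp
  have "a < b" "a \<le> b" using b_gt by auto
  have f_cont: "continuous_on {a..b} f" "isCont f b"
    using DERIV_isCont[OF f_deriv] by (auto intro: continuous_at_imp_continuous_on)
  have p_cont': "continuous_on {a..b} p"
    using p_cont by (rule continuous_on_subset) simp
  have p_iff: "p x \<noteq> 0 \<longleftrightarrow> x \<in> {a<..<b}" for x
    using p_supp[unfolded set_eq_iff] by simp
  have p_pos: "0 < p x" if "x \<in> {a<..<b}" for x
    using p_iff[of x] p_nonneg[of x] that by linarith
  have p_zero: "p x = 0" if "x \<notin> {a..b}" for x
    using p_iff[of x] that by auto
  have v_pos': "0 < v $ j" for j
    using v_pos Min_le[of "range (\<lambda>j. v $ j)" "v $ j"] by simp
  have G_eq: "G \<theta> $ j = 2 * v $ j * residual_tail c v f p a b \<theta> j" for \<theta> j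
  proof -
    note grad = gderiv_risk[OF \<open>a \<le> b\<close> f_cont(1) p_cont' p_zero, of c v \<theta>]
    have "risk c v f p differentiable (at \<theta>)"
      using grad unfolding gderiv_def by (rule differentiableI)
    then have "- G \<theta> = (\<chi> j. - 2 * v $ j * residual_tail c v f p a b \<theta> j)"
      using G_grad grad by (blast intro: gderiv_unique)
    then show ?thesis
      by (simp add: vec_eq_iff)
  qed
  have lim: "(\<Theta> \<longlongrightarrow> \<theta>lim) at_top"
    using tendsto_zero_if_Limsup_zero[OF conv, of "\<lambda>t. norm (\<Theta> t - \<theta>lim)"]
    by (simp add: tendsto_norm_zero_iff LIM_zero_iff)
  have "((\<lambda>t::real. norm (G \<theta>lim)) \<longlongrightarrow> 0) at_top"
    by (rule tendsto_zero_if_Limsup_zero[OF conv]) auto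
  then have G_lim: "G \<theta>lim = 0"
    by (simp add: tendsto_const_iff)
  define L where "L = (SUP x\<in>{a..b}. f' x)"
  have "bdd_above (f' ` {a..b})"
    by (intro bounded_imp_bdd_above compact_imp_bounded compact_continuous_image
        continuous_on_subset[OF f'_cont]) auto
  then have f'_le: "f' x \<le> L" if "x \<in> {a..b}" for x
    unfolding L_def using that by (intro cSUP_upper)
  have "L \<le> (\<Sum>j\<in>{j. \<Theta> 0 $ j < b}. v $ j)"
    using active unfolding L_def .
  also have "\<dots> \<le> (\<Sum>j\<in>{j. \<theta>lim $ j < b}. v $ j)"
    using active_component_limit_below[OF \<open>a \<le> b\<close> f_cont p_cont' p_nonneg G_eq less_imp_le[OF v_pos']
        \<Theta>_cont \<Theta>_flow lim below] v_pos'
    by (intro sum_mono2) (auto intro: less_imp_le)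
  finally obtain j where "residual_tail c v f p a b \<theta>lim j < 0"
    using residual_tail_negative_at_last_kink[OF \<open>a < b\<close> f_deriv f'_le _ _ p_cont' p_pos below]
      f'_le[of a] f'_pos[of a] \<open>a \<le> b\<close> by force
  with G_eq[of \<theta>lim j] G_lim v_pos'[of j] show False
    by simp
qed

end
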